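(* Let $(A,\cdot,\circ)$ be a skew brace and $C$ a sub-skew brace which is a trivial skew brace and a left ideal in $A^{\mathrm{op}}$. Then for all $a\in A$ and $c\in C$, \[ c\circ a\circ\overline{c} \in \big(\lambda^{\mathrm{op}}_c(a)\,c\big)\circ C \quad\text{and}\quad a\circ C = C a. \]
   Context: A skew brace is a set $A$ with two group operations $\cdot$ (often written by juxtaposition) and $\circ$ such that $a\circ(bc) = (a\circ b)\,a^{-1}\,(a\circ c)$ for all $a,b,c\in A$. $a^{-1}$ denotes the inverse of $a$ in $(A,\cdot)$ and $\overline{a}$ its inverse in $(A,\circ)$. Define $\lambda^{\mathrm{op}}_a(b) = (a\circ b)a^{-1}$ (an automorphism of $(A,\cdot)$). A sub-skew brace is a subset that is a subgroup of both groups; it is trivial if $a\circ b=ab$ for all its elements. The opposite skew brace $A^{\mathrm{op}}$ is $A$ with $a\cdot^{\mathrm{op}}b=ba$ and the same $\circ$; a subgroup $I$ of $(A,\cdot)$ is a left ideal in $A^{\mathrm{op}}$ iff $\lambda^{\mathrm{op}}_a(x)\in I$ for all $a\in A$, $x\in I$. $a\circ C=\{a\circ y:y\in C\}$, $Ca=\{ya:y\in C\}$. *)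

theory Defs
  imports "HOL-Algebra.Group"
begin

definition skew_brace :: "('a, 'm) monoid_scheme \<Rightarrow> ('a, 'n) monoid_scheme \<Rightarrow> bool" where
  "skew_brace G H \<longleftrightarrow> group G \<and> group H \<and> carrier H = carrier G \<and>
     (\<forall>a\<in>carrier G. \<forall>b\<in>carrier G. \<forall>c\<in>carrier G.
        a \<otimes>\<^bsub>H\<^esub> (b \<otimes>\<^bsub>G\<^esub> c)
        = (a \<otimes>\<^bsub>H\<^esub> b) \<otimes>\<^bsub>G\<^esub> inv\<^bsub>G\<^esub> a \<otimes>\<^bsub>G\<^esub> (a \<otimes>\<^bsub>H\<^esub> c))"

definition lambda_op :: "('a, 'm) monoid_scheme \<Rightarrow> ('a, 'n) monoid_scheme \<Rightarrow> 'a \<Rightarrow> 'a \<Rightarrow> 'a" where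
  "lambda_op G H a b = (a \<otimes>\<^bsub>H\<^esub> b) \<otimes>\<^bsub>G\<^esub> inv\<^bsub>G\<^esub> a"

definition sub_skew_brace :: "'a set \<Rightarrow> ('a, 'm) monoid_scheme \<Rightarrow> ('a, 'n) monoid_scheme \<Rightarrow> bool" where
  "sub_skew_brace C G H \<longleftrightarrow> subgroup C G \<and> subgroup C H"

definition trivial_on :: "'a set \<Rightarrow> ('a, 'm) monoid_scheme \<Rightarrow> ('a, 'n) monoid_scheme \<Rightarrow> bool" where
  "trivial_on C G H \<longleftrightarrow> (\<forall>x\<in>C. \<forall>y\<in>C. x \<otimes>\<^bsub>H\<^esub> y = x \<otimes>\<^bsub>G\<^esub> y)"

definition left_ideal_op :: "'a set \<Rightarrow> ('a, 'm) monoid_scheme \<Rightarrow> ('a, 'n) monoid_scheme \<Rightarrow> bool" where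
  "left_ideal_op I G H \<longleftrightarrow> subgroup I G \<and>
     (\<forall>a\<in>carrier G. \<forall>x\<in>I. lambda_op G H a x \<in> I)"

end

theory Submission
  imports Defs
begin

text \<open>Since \<open>a \<circ> y = \<lambda>\<^sup>o\<^sup>p\<^sub>a(y) a\<close>, the first claim is witnessed by \<open>y = c\<inverse>\<close> (inverse in \<open>(A,\<circ>)\<close>).
  For the second, \<open>a \<mapsto> \<lambda>\<^sup>o\<^sup>p\<^sub>a\<close> is an action of \<open>(A,\<circ>)\<close> on \<open>A\<close>, so each \<open>\<lambda>\<^sup>o\<^sup>p\<^sub>a\<close> permutes
  the left ideal \<open>C\<close> of \<open>A\<^sup>o\<^sup>p\<close>, and hence \<open>a \<circ> C = \<lambda>\<^sup>o\<^sup>p\<^sub>a(C) a = C a\<close>.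
  Neither claim uses that \<open>C\<close> is a trivial brace.\<close>

locale skew_brace_structure = G: group G + H: group H
  for G :: "('a, 'm) monoid_scheme" and H :: "('a, 'n) monoid_scheme" +
  assumes carrier_eq: "carrier H = carrier G"
    and brace_law: "\<lbrakk>a \<in> carrier G; b \<in> carrier G; c \<in> carrier G\<rbrakk> \<Longrightarrow>
      a \<otimes>\<^bsub>H\<^esub> (b \<otimes>\<^bsub>G\<^esub> c) = (a \<otimes>\<^bsub>H\<^esub> b) \<otimes>\<^bsub>G\<^esub> inv\<^bsub>G\<^esub> a \<otimes>\<^bsub>G\<^esub> (a \<otimes>\<^bsub>H\<^esub> c)"

lemma skew_brace_imp_structure:
  "skew_brace G H \<Longrightarrow> skew_brace_structure G H"
  unfolding skew_brace_def skew_brace_structure_def skew_brace_structure_axioms_def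
  by blast

lemma left_ideal_op_subset: "left_ideal_op I G H \<Longrightarrow> I \<subseteq> carrier G"
  unfolding left_ideal_op_def using subgroup.subset by blast

lemma left_ideal_op_lambda_op_closed:
  "left_ideal_op I G H \<Longrightarrow> a \<in> carrier G \<Longrightarrow> x \<in> I \<Longrightarrow> lambda_op G H a x \<in> I"
  unfolding left_ideal_op_def by blast

context skew_brace_structure
begin

lemma H_mult_closed [simp]:
  "a \<in> carrier G \<Longrightarrow> b \<in> carrier G \<Longrightarrow> a \<otimes>\<^bsub>H\<^esub> b \<in> carrier G"
  using H.m_closed carrier_eq by blast

lemma H_inv_closed [simp]: "a \<in> carrier G \<Longrightarrow> inv\<^bsub>H\<^esub> a \<in> carrier G"
  using H.inv_closed carrier_eq by blast

lemma one_eq: "\<one>\<^bsub>H\<^esub> = \<one>\<^bsub>G\<^esub>"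
proof -
  let ?e = "\<one>\<^bsub>H\<^esub>"
  have e: "?e \<in> carrier G" using carrier_eq by auto
  have e_one: "?e \<otimes>\<^bsub>H\<^esub> \<one>\<^bsub>G\<^esub> = \<one>\<^bsub>G\<^esub>" using carrier_eq by auto
  have "?e \<otimes>\<^bsub>H\<^esub> (\<one>\<^bsub>G\<^esub> \<otimes>\<^bsub>G\<^esub> \<one>\<^bsub>G\<^esub>) = \<one>\<^bsub>G\<^esub> \<otimes>\<^bsub>G\<^esub> inv\<^bsub>G\<^esub> ?e \<otimes>\<^bsub>G\<^esub> \<one>\<^bsub>G\<^esub>"
    using brace_law[OF e, of "\<one>\<^bsub>G\<^esub>" "\<one>\<^bsub>G\<^esub>"] e_one by simp
  then have "\<one>\<^bsub>G\<^esub> = inv\<^bsub>G\<^esub> ?e" using e e_one by simp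
  then show ?thesis using e by (metis G.inv_inv G.inv_one)
qed

lemma lambda_op_closed [simp]:
  "a \<in> carrier G \<Longrightarrow> x \<in> carrier G \<Longrightarrow> lambda_op G H a x \<in> carrier G"
  unfolding lambda_op_def by simp

lemma lambda_op_mult:
  "a \<in> carrier G \<Longrightarrow> x \<in> carrier G \<Longrightarrow> lambda_op G H a x \<otimes>\<^bsub>G\<^esub> a = a \<otimes>\<^bsub>H\<^esub> x"
  unfolding lambda_op_def by (simp add: G.m_assoc)

lemma lambda_op_one:
  assumes "x \<in> carrier G"
  shows "lambda_op G H \<one>\<^bsub>G\<^esub> x = x"
proof -
  have "\<one>\<^bsub>G\<^esub> \<otimes>\<^bsub>H\<^esub> x = x"
    using assms carrier_eq H.l_one one_eq by metis
  then show ?thesis unfolding lambda_op_def using assms by simp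
qed

lemma brace_mult_inv:
  assumes a: "a \<in> carrier G" and b: "b \<in> carrier G"
  shows "a \<otimes>\<^bsub>H\<^esub> inv\<^bsub>G\<^esub> b = a \<otimes>\<^bsub>G\<^esub> inv\<^bsub>G\<^esub> (a \<otimes>\<^bsub>H\<^esub> b) \<otimes>\<^bsub>G\<^esub> a"
proof -
  have "a = a \<otimes>\<^bsub>H\<^esub> (b \<otimes>\<^bsub>G\<^esub> inv\<^bsub>G\<^esub> b)"
    using a b carrier_eq by (simp add: one_eq [symmetric])
  also have "\<dots> = lambda_op G H a b \<otimes>\<^bsub>G\<^esub> (a \<otimes>\<^bsub>H\<^esub> inv\<^bsub>G\<^esub> b)"
    unfolding lambda_op_def by (rule brace_law[OF a b G.inv_closed[OF b]])
  finally have "inv\<^bsub>G\<^esub> (lambda_op G H a b) \<otimes>\<^bsub>G\<^esub> a = a \<otimes>\<^bsub>H\<^esub> inv\<^bsub>G\<^esub> b"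
    using a b by (metis G.inv_closed G.inv_solve_left H_mult_closed lambda_op_closed)
  then show ?thesis
    unfolding lambda_op_def using a b by (simp add: G.inv_mult_group G.m_assoc)
qed

lemma lambda_op_comp:
  assumes a: "a \<in> carrier G" and b: "b \<in> carrier G" and x: "x \<in> carrier G"
  shows "lambda_op G H a (lambda_op G H b x) = lambda_op G H (a \<otimes>\<^bsub>H\<^esub> b) x"
proof -
  have "lambda_op G H a (lambda_op G H b x)
      = (a \<otimes>\<^bsub>H\<^esub> ((b \<otimes>\<^bsub>H\<^esub> x) \<otimes>\<^bsub>G\<^esub> inv\<^bsub>G\<^esub> b)) \<otimes>\<^bsub>G\<^esub> inv\<^bsub>G\<^esub> a"
    unfolding lambda_op_def ..
  also have "\<dots> = ((a \<otimes>\<^bsub>H\<^esub> (b \<otimes>\<^bsub>H\<^esub> x)) \<otimes>\<^bsub>G\<^esub> inv\<^bsub>G\<^esub> a \<otimes>\<^bsub>G\<^esub>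
        (a \<otimes>\<^bsub>G\<^esub> inv\<^bsub>G\<^esub> (a \<otimes>\<^bsub>H\<^esub> b) \<otimes>\<^bsub>G\<^esub> a)) \<otimes>\<^bsub>G\<^esub> inv\<^bsub>G\<^esub> a"
    using brace_law[OF a, of "b \<otimes>\<^bsub>H\<^esub> x" "inv\<^bsub>G\<^esub> b"] brace_mult_inv[OF a b] b x by simp
  also have "\<dots> = (a \<otimes>\<^bsub>H\<^esub> (b \<otimes>\<^bsub>H\<^esub> x)) \<otimes>\<^bsub>G\<^esub> inv\<^bsub>G\<^esub> (a \<otimes>\<^bsub>H\<^esub> b)"
    using a b x by (simp add: G.m_assoc [symmetric]) (simp add: G.m_assoc)
  also have "\<dots> = lambda_op G H (a \<otimes>\<^bsub>H\<^esub> b) x"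
    unfolding lambda_op_def using a b x carrier_eq by (simp add: H.m_assoc)
  finally show ?thesis .
qed

lemma lambda_op_image_left_ideal_op:
  assumes I: "left_ideal_op I G H" and a: "a \<in> carrier G"
  shows "lambda_op G H a ` I = I"
proof
  show "lambda_op G H a ` I \<subseteq> I"
    using left_ideal_op_lambda_op_closed[OF I a] by blast
  show "I \<subseteq> lambda_op G H a ` I"
  proof
    fix y assume y: "y \<in> I"
    then have y_G: "y \<in> carrier G" using left_ideal_op_subset[OF I] by blast
    have "lambda_op G H a (lambda_op G H (inv\<^bsub>H\<^esub> a) y) = lambda_op G H (a \<otimes>\<^bsub>H\<^esub> inv\<^bsub>H\<^esub> a) y"
      using a y_G by (simp add: lambda_op_comp)
    also have "\<dots> = y"
      using a y_G carrier_eq by (simp add: one_eq lambda_op_one)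
    finally have "y = lambda_op G H a (lambda_op G H (inv\<^bsub>H\<^esub> a) y)" ..
    moreover have "lambda_op G H (inv\<^bsub>H\<^esub> a) y \<in> I"
      using a y by (intro left_ideal_op_lambda_op_closed[OF I]) simp_all
    ultimately show "y \<in> lambda_op G H a ` I" by (rule image_eqI)
  qed
qed

lemma left_ideal_op_brace_coset_eq:
  assumes I: "left_ideal_op I G H" and a: "a \<in> carrier G"
  shows "(\<lambda>y. a \<otimes>\<^bsub>H\<^esub> y) ` I = (\<lambda>y. y \<otimes>\<^bsub>G\<^esub> a) ` I"
proof -
  have "(\<lambda>y. a \<otimes>\<^bsub>H\<^esub> y) ` I = (\<lambda>y. lambda_op G H a y \<otimes>\<^bsub>G\<^esub> a) ` I"
    using left_ideal_op_subset[OF I] a by (intro image_cong) (auto simp: lambda_op_mult)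
  also have "\<dots> = (\<lambda>y. y \<otimes>\<^bsub>G\<^esub> a) ` lambda_op G H a ` I"
    by (simp add: image_image)
  also have "\<dots> = (\<lambda>y. y \<otimes>\<^bsub>G\<^esub> a) ` I"
    by (simp add: lambda_op_image_left_ideal_op[OF I a])
  finally show ?thesis .
qed

end

theorem lemma6p3:
  fixes G :: "('a, 'm) monoid_scheme" and H :: "('a, 'n) monoid_scheme" and C :: "'a set"
  assumes "skew_brace G H"
    and "sub_skew_brace C G H"
    and "trivial_on C G H"
    and "left_ideal_op C G H"
  shows "\<forall>a\<in>carrier G. \<forall>c\<in>C.
           c \<otimes>\<^bsub>H\<^esub> a \<otimes>\<^bsub>H\<^esub> inv\<^bsub>H\<^esub> c
             \<in> (\<lambda>y. (lambda_op G H c a \<otimes>\<^bsub>G\<^esub> c) \<otimes>\<^bsub>H\<^esub> y) ` C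
         \<and> (\<lambda>y. a \<otimes>\<^bsub>H\<^esub> y) ` C = (\<lambda>y. y \<otimes>\<^bsub>G\<^esub> a) ` C"
proof (intro ballI conjI)
  interpret skew_brace_structure G H
    using assms(1) by (rule skew_brace_imp_structure)
  fix a c assume a: "a \<in> carrier G" and c: "c \<in> C"
  have "c \<otimes>\<^bsub>H\<^esub> a = lambda_op G H c a \<otimes>\<^bsub>G\<^esub> c"
    using a c left_ideal_op_subset[OF assms(4)] by (simp add: lambda_op_mult subset_iff)
  moreover have "inv\<^bsub>H\<^esub> c \<in> C"
    using assms(2) c unfolding sub_skew_brace_def by (blast intro: subgroup.m_inv_closed)
  ultimately show "c \<otimes>\<^bsub>H\<^esub> a \<otimes>\<^bsub>H\<^esub> inv\<^bsub>H\<^esub> c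
      \<in> (\<lambda>y. (lambda_op G H c a \<otimes>\<^bsub>G\<^esub> c) \<otimes>\<^bsub>H\<^esub> y) ` C"
    by simp
  show "(\<lambda>y. a \<otimes>\<^bsub>H\<^esub> y) ` C = (\<lambda>y. y \<otimes>\<^bsub>G\<^esub> a) ` C"
    using assms(4) a by (rule left_ideal_op_brace_coset_eq)
qed

end
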